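(* Let $m\geq 1$ and $n>2m$ be integers with $\gcd\{m,n\}=1$, and let $$P(z)=z^{n}-\frac{2n}{n-m}z^{n-m}+\frac{n}{n-2m}z^{n-2m}+c,$$ where $c\in\mathbb{C}$ satisfies $|c|\neq 0$ and $|c|\neq\frac{2m^2}{(n-m)(n-2m)}$. Then $P$ is a critically injective polynomial having only simple zeros.
   Context: A polynomial $P$ whose derivative $P'$ has distinct zeros $d_1,\dots,d_t$ is called critically injective if $P(d_i)\neq P(d_j)$ for all $i\neq j$. *)

theory Defs
  imports Complex_Main "HOL-Computational_Algebra.Polynomial"
begin

definition critically_injective :: "complex poly \<Rightarrow> bool" where
  "critically_injective P \<longleftrightarrow>
     (\<forall>a b. poly (pderiv P) a = 0 \<and> poly (pderiv P) b = 0 \<and> a \<noteq> b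
            \<longrightarrow> poly P a \<noteq> poly P b)"

end

theory Submission
  imports Defs
begin

text \<open>
  The derivative factors as \<open>P'(z) = n z^(n-2m-1) (z^m - 1)^2\<close>, so the critical points are
  \<open>0\<close> and the \<open>m\<close>-th roots of unity. At \<open>0\<close> the polynomial takes the value \<open>c\<close>, and at an
  \<open>m\<close>-th root of unity \<open>w\<close> it takes the value \<open>K w^n + c\<close> with
  \<open>K = 2m^2 / ((n - m)(n - 2m)) > 0\<close>. Since \<open>gcd(m, n) = 1\<close>, the map \<open>w \<mapsto> w^n\<close> permutes
  the \<open>m\<close>-th roots of unity, so all critical values are distinct. A multiple zero would be a
  critical point with critical value \<open>0\<close>, forcing \<open>c = 0\<close> or \<open>|c| = K\<close>.
\<close>

lemma power_coprime_inj_on_roots_of_unity: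
  fixes a b :: "'a::idom"
  assumes "coprime m n" "a ^ m = 1" "b ^ m = 1" "a ^ n = b ^ n"
  shows "a = b"
proof (cases "m = 0")
  case True
  then show ?thesis using assms(1,4) by simp
next
  case False
  obtain x y where "m * x = n * y + gcd m n" using bezout_nat[OF False] by blast
  with assms(1) have bezout: "m * x = n * y + 1" by simp
  have "a * a ^ (n * y) = 1" "b * b ^ (n * y) = 1"
    using arg_cong[OF bezout, of "(^) a"] arg_cong[OF bezout, of "(^) b"] assms(2,3)
    by (simp_all add: power_add power_mult mult.commute)
  moreover have "a ^ (n * y) = b ^ (n * y)"
    using assms(4) by (simp add: power_mult)
  ultimately show ?thesis
    by (metis mult.assoc mult.commute mult.left_neutral)
qed

definition crit_poly :: "nat \<Rightarrow> nat \<Rightarrow> complex \<Rightarrow> complex poly" where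
  "crit_poly m n c = monom 1 n
      - smult (2 * of_nat n / of_nat (n - m)) (monom 1 (n - m))
      + smult (of_nat n / of_nat (n - 2 * m)) (monom 1 (n - 2 * m))
      + [:c:]"

definition crit_modulus :: "nat \<Rightarrow> nat \<Rightarrow> real" where
  "crit_modulus m n = 2 * (real m)^2 / (real (n - m) * real (n - 2 * m))"

lemma crit_modulus_pos: "m \<ge> 1 \<Longrightarrow> n > 2 * m \<Longrightarrow> crit_modulus m n > 0"
  by (simp add: crit_modulus_def)

lemma poly_crit_poly:
  "poly (crit_poly m n c) z =
     z ^ n - (2 * of_nat n / of_nat (n - m)) * z ^ (n - m)
       + (of_nat n / of_nat (n - 2 * m)) * z ^ (n - 2 * m) + c"
  by (simp add: crit_poly_def poly_monom)

lemma poly_crit_poly_0: "n > 2 * m \<Longrightarrow> poly (crit_poly m n c) 0 = c"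
  by (simp add: poly_crit_poly power_0_left)

lemma poly_crit_poly_root_of_unity:
  assumes "n > 2 * m" "w ^ m = 1"
  shows "poly (crit_poly m n c) w = of_real (crit_modulus m n) * w ^ n + c"
proof -
  obtain i where n: "n = 2 * m + Suc i"
    using assms(1) by (metis add_Suc_right less_iff_Suc_add)
  have "w ^ (n - m) = w ^ n" "w ^ (n - 2 * m) = w ^ n"
    using assms(2) by (simp_all add: n power_add mult_2 flip: add.assoc)
  then have "poly (crit_poly m n c) w
      = of_real (1 - 2 * real n / real (n - m) + real n / real (n - 2 * m)) * w ^ n + c"
    by (simp add: poly_crit_poly algebra_simps)
  also have "1 - 2 * real n / real (n - m) + real n / real (n - 2 * m) = crit_modulus m n"
    by (simp add: crit_modulus_def n field_simps power2_eq_square)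
  finally show ?thesis .
qed

lemma poly_pderiv_crit_poly:
  assumes "n > 2 * m"
  shows "poly (pderiv (crit_poly m n c)) z = of_nat n * z ^ (n - 2 * m - 1) * (z ^ m - 1)\<^sup>2"
proof -
  obtain i where n: "n = 2 * m + Suc i"
    using assms by (metis add_Suc_right less_iff_Suc_add)
  have "n - m = Suc (m + i)" "n - 2 * m = Suc i" "n - 1 = 2 * m + i"
    using n by simp_all
  then have "poly (pderiv (crit_poly m n c)) z
      = of_nat n * z ^ (2 * m + i) - 2 * of_nat n * z ^ (m + i) + of_nat n * z ^ i"
    by (simp add: crit_poly_def pderiv_add pderiv_diff pderiv_smult pderiv_monom pderiv_pCons
        poly_monom del: of_nat_Suc)
  also have "\<dots> = of_nat n * z ^ i * (z ^ m - 1)\<^sup>2"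
  proof -
    have powers: "z ^ (2 * m + i) = z ^ i * (z ^ m * z ^ m)" "z ^ (m + i) = z ^ i * z ^ m"
      unfolding mult_2 power_add by (simp_all add: mult_ac)
    show ?thesis
      unfolding powers power2_eq_square by algebra
  qed
  finally show ?thesis by (simp add: n)
qed

lemma crit_poly_critical_point:
  assumes "n > 2 * m" "poly (pderiv (crit_poly m n c)) z = 0"
  shows "z = 0 \<or> z ^ m = 1"
  using assms by (auto simp: poly_pderiv_crit_poly)

lemma critically_injective_crit_poly:
  assumes "m \<ge> 1" "n > 2 * m" "coprime m n"
  shows "critically_injective (crit_poly m n c)"
  unfolding critically_injective_def
proof (intro allI impI)
  fix a b
  assume crit: "poly (pderiv (crit_poly m n c)) a = 0 \<and> poly (pderiv (crit_poly m n c)) b = 0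
    \<and> a \<noteq> b"
  let ?K = "of_real (crit_modulus m n) :: complex"
  have K: "?K \<noteq> 0"
    using crit_modulus_pos[OF assms(1,2)] by simp
  have root_value: "poly (crit_poly m n c) w \<noteq> c" if "w ^ m = 1" for w
    using that assms K by (auto simp: poly_crit_poly_root_of_unity power_0_left)
  consider "a ^ m = 1" "b ^ m = 1" | "a = 0" "b ^ m = 1" | "b = 0" "a ^ m = 1"
    using crit crit_poly_critical_point[OF assms(2)] by blast
  then show "poly (crit_poly m n c) a \<noteq> poly (crit_poly m n c) b"
  proof cases
    case 1
    then have "a ^ n \<noteq> b ^ n"
      using crit power_coprime_inj_on_roots_of_unity[OF assms(3)] by blast
    then show ?thesis
      using K 1 by (simp add: poly_crit_poly_root_of_unity[OF assms(2)])
  next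
    case 2
    then show ?thesis using root_value[of b] by (simp add: poly_crit_poly_0[OF assms(2)])
  next
    case 3
    then show ?thesis using root_value[of a] by (simp add: poly_crit_poly_0[OF assms(2)])
  qed
qed

lemma rsquarefree_crit_poly:
  assumes "m \<ge> 1" "n > 2 * m" "c \<noteq> 0" "cmod c \<noteq> crit_modulus m n"
  shows "rsquarefree (crit_poly m n c)"
  unfolding rsquarefree_roots
proof (intro allI notI)
  fix a
  assume zero: "poly (crit_poly m n c) a = 0 \<and> poly (pderiv (crit_poly m n c)) a = 0"
  then consider "a = 0" | "a ^ m = 1"
    using crit_poly_critical_point[OF assms(2)] by blast
  then show False
  proof cases
    case 1
    then show False using zero assms(2,3) by (simp add: poly_crit_poly_0)
  next
    case 2
    then have "norm a = 1"
      using power_eq_1_iff assms(1) by fastforce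
    moreover have "c = - (of_real (crit_modulus m n) * a ^ n)"
      using zero poly_crit_poly_root_of_unity[OF assms(2) 2] by (simp add: add_eq_0_iff)
    ultimately have "cmod c = crit_modulus m n"
      using crit_modulus_pos[OF assms(1,2)] by (simp add: norm_mult norm_power)
    with assms(4) show False ..
  qed
qed

theorem lemma3p1:
  fixes m n :: nat and c :: complex
  assumes "m \<ge> 1" and "n > 2 * m" and "coprime m n"
    and "cmod c \<noteq> 0"
    and "cmod c \<noteq> 2 * (real m)^2 / (real (n - m) * real (n - 2 * m))"
  defines "P \<equiv> monom 1 n
      - smult (2 * of_nat n / of_nat (n - m)) (monom 1 (n - m))
      + smult (of_nat n / of_nat (n - 2 * m)) (monom 1 (n - 2 * m))
      + [:c:]"
  shows "critically_injective P \<and> rsquarefree P"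
proof -
  have "P = crit_poly m n c"
    by (simp add: P_def crit_poly_def)
  moreover have "c \<noteq> 0" "cmod c \<noteq> crit_modulus m n"
    using assms(4,5) by (simp_all add: crit_modulus_def)
  ultimately show ?thesis
    using critically_injective_crit_poly[OF assms(1-3)] rsquarefree_crit_poly[OF assms(1,2)]
    by simp
qed

end
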